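(* For every positive integer $q$, the simplicial complex $\mathbb{M}_q^2$, with vertex $\ell_{i,j}$ labeled by $\tau_i\tau_j$, supports the minimal free resolution of $\mathcal{T}_q^{\,2}$, where $\mathcal{T}_q$ is the permutation ideal.
   Context: $S_q$ is the symmetric group on $[q]$; for $\sigma=i_1\cdots i_q$ in one-line notation, $\sigma(j)=i_j$. $K$ is a field, $S_{\mathcal{T}}=K[x_\sigma:\sigma\in S_q]$, $\tau_i=\prod_{\sigma\in S_q}x_\sigma^{\sigma(i)}$, $\mathcal{T}_q=(\tau_1,\ldots,\tau_q)$. $\mathbb{M}_q^2$: vertex set $\{\ell_{i,j}:1\le i\le j\le q\}$, $\mathcal{M}=\{\ell_{i,j}:i<j\}$, facets $\mathcal{M}_k=\mathcal{M}\cup\{\ell_{k,k}\}$, $k\in[q]$. A labeled simplicial complex (faces labeled by lcm of vertex labels) supports a free resolution of the ideal generated by its vertex labels if the Bayer–Peeva–Sturmfels homogenization of its augmented simplicial chain complex (free basis element for each face $\tau$ in multidegree $m_\tau$, differential $\tau\mapsto\sum\pm(m_\tau/m_{\tau\setminus v})(\tau\setminus v)$) is exact, i.e. is a free resolution of that ideal. *)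

theory Defs
  imports "HOL-Library.Poly_Mapping" "HOL-Library.Product_Lexorder" "HOL-Combinatorics.Permutations"
begin

type_synonym ('x, 'k) mpoly = "('x \<Rightarrow>\<^sub>0 nat) \<Rightarrow>\<^sub>0 'k"

definition mono :: "('x \<Rightarrow>\<^sub>0 nat) \<Rightarrow> ('x, 'k::zero_neq_one) mpoly" where
  "mono a = Poly_Mapping.single a 1"

(* exponent vector of the lcm of the labels of the vertices of a face (empty face: 1) *)
definition face_label :: "('v \<Rightarrow> ('x \<Rightarrow>\<^sub>0 nat)) \<Rightarrow> 'v set \<Rightarrow> ('x \<Rightarrow>\<^sub>0 nat)" where
  "face_label lab \<sigma> = Abs_poly_mapping (\<lambda>x. Max (insert 0 ((\<lambda>v. Poly_Mapping.lookup (lab v) x) ` \<sigma>)))"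

(* Bayer-Peeva-Sturmfels homogenized differential of the augmented chain complex.
   A chain is a function from faces to polynomials (the coefficient vector w.r.t. the
   free basis indexed by the faces).  The basis element of \<tau> is sent to
   \<Sum>_{v\<in>\<tau>} (-1)^(position of v in \<tau>) (m_\<tau>/m_{\<tau>-v}) (\<tau>-v). *)
definition bps_diff ::
  "'v::linorder set set \<Rightarrow> ('v \<Rightarrow> ('x \<Rightarrow>\<^sub>0 nat)) \<Rightarrow> ('v set \<Rightarrow> ('x, 'k::comm_ring_1) mpoly)
     \<Rightarrow> 'v set \<Rightarrow> ('x, 'k) mpoly" where
  "bps_diff \<Delta> lab f \<sigma> =
     (\<Sum>\<tau> \<in> {\<tau> \<in> \<Delta>. \<sigma> \<subseteq> \<tau> \<and> card \<tau> = Suc (card \<sigma>)}.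
        (-1) ^ card {w \<in> \<sigma>. w < the_elem (\<tau> - \<sigma>)}
        * mono (face_label lab \<tau> - face_label lab \<sigma>) * f \<tau>)"

(* chains in homological position k-1, i.e. supported on faces with k vertices *)
definition chain_on :: "'v set set \<Rightarrow> nat \<Rightarrow> ('v set \<Rightarrow> 'a::zero) \<Rightarrow> bool" where
  "chain_on \<Delta> k f \<longleftrightarrow> (\<forall>\<sigma>. f \<sigma> \<noteq> 0 \<longrightarrow> \<sigma> \<in> \<Delta> \<and> card \<sigma> = k)"

definition ideal_gen :: "'a::comm_ring_1 set \<Rightarrow> 'a set" where
  "ideal_gen G = {(\<Sum>g\<in>F. a g * g) | F a. finite F \<and> F \<subseteq> G}"

definition ideal_prod :: "'a::comm_ring_1 set \<Rightarrow> 'a set \<Rightarrow> 'a set" where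
  "ideal_prod I J = ideal_gen {a * b | a b. a \<in> I \<and> b \<in> J}"

(* The homogenized augmented chain complex is a free resolution of I:
   exact at every F_i (i \<ge> 0, faces with i+1 vertices), where F_0 maps to S via the
   empty face, and the image of F_0 \<rightarrow> S is I. *)
definition supports_free_resolution ::
  "'v::linorder set set \<Rightarrow> ('v \<Rightarrow> ('x \<Rightarrow>\<^sub>0 nat)) \<Rightarrow> ('x, 'k::comm_ring_1) mpoly set \<Rightarrow> bool" where
  "supports_free_resolution \<Delta> lab I \<longleftrightarrow>
     (\<forall>k \<ge> 1. \<forall>f::'v set \<Rightarrow> ('x, 'k) mpoly. chain_on \<Delta> k f \<and> bps_diff \<Delta> lab f = (\<lambda>_. 0) \<longrightarrow>
         (\<exists>g. chain_on \<Delta> (Suc k) g \<and> bps_diff \<Delta> lab g = f))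
     \<and> {bps_diff \<Delta> lab f {} | f::'v set \<Rightarrow> ('x, 'k) mpoly. chain_on \<Delta> 1 f} = I"

(* minimality: d(F_i) \<subseteq> \<mm> F_{i-1} for all i \<ge> 1, \<mm> = ideal of the variables
   (polynomials with zero constant term) *)
definition supports_minimal_free_resolution ::
  "'v::linorder set set \<Rightarrow> ('v \<Rightarrow> ('x \<Rightarrow>\<^sub>0 nat)) \<Rightarrow> ('x, 'k::comm_ring_1) mpoly set \<Rightarrow> bool" where
  "supports_minimal_free_resolution \<Delta> lab I \<longleftrightarrow>
     supports_free_resolution \<Delta> lab I \<and>
     (\<forall>k \<ge> 1. \<forall>f::'v set \<Rightarrow> ('x, 'k) mpoly. chain_on \<Delta> (Suc k) f \<longrightarrow>
         (\<forall>\<sigma>. Poly_Mapping.lookup (bps_diff \<Delta> lab f \<sigma>) 0 = 0))"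

(* Permutation ideal: variables x_\<sigma> indexed by permutations \<sigma> of {1..q}
   (functions nat \<Rightarrow> nat with \<sigma> permutes {1..q}); \<tau>_i = \<Prod>_\<sigma> x_\<sigma>^\<sigma>(i). *)
definition tau_exp :: "nat \<Rightarrow> nat \<Rightarrow> ((nat \<Rightarrow> nat) \<Rightarrow>\<^sub>0 nat)" where
  "tau_exp q i = Abs_poly_mapping (\<lambda>\<sigma>. if \<sigma> permutes {1..q} then \<sigma> i else 0)"

definition tau :: "nat \<Rightarrow> nat \<Rightarrow> (nat \<Rightarrow> nat, 'k::field) mpoly" where
  "tau q i = mono (tau_exp q i)"

definition perm_ideal :: "nat \<Rightarrow> (nat \<Rightarrow> nat, 'k::field) mpoly set" where
  "perm_ideal q = ideal_gen (tau q ` {1..q})"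

(* the complex M_q^2: vertex (i,j) stands for \<ell>_{i,j}, 1 \<le> i \<le> j \<le> q *)
definition M_set :: "nat \<Rightarrow> (nat \<times> nat) set" where
  "M_set q = {(i, j). 1 \<le> i \<and> i < j \<and> j \<le> q}"

definition M2_complex :: "nat \<Rightarrow> (nat \<times> nat) set set" where
  "M2_complex q = {\<sigma>. \<exists>k \<in> {1..q}. \<sigma> \<subseteq> insert (k, k) (M_set q)}"

definition M2_label :: "nat \<Rightarrow> nat \<times> nat \<Rightarrow> ((nat \<Rightarrow> nat) \<Rightarrow>\<^sub>0 nat)" where
  "M2_label q v = tau_exp q (fst v) + tau_exp q (snd v)"

end

theory Submission
  imports Defs "HOL.Modules"
begin

text \<open>In multidegree \<open>b\<close> the homogenized complex is the simplicial chain complex of the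
  faces whose label divides \<open>x\<^sup>b\<close>, so it suffices to show that these subcomplexes are
  acyclic. Every facet of \<open>\<bbbM>\<^sub>q\<^sup>2\<close> contains all vertices \<open>l\<^sub>i\<^sub>j\<close> with \<open>i < j\<close>, so if
  one of them survives in degree \<open>b\<close> the subcomplex is a cone over it. Otherwise only
  diagonal vertices \<open>l\<^sub>c\<^sub>c\<close> survive, and at most one of them, because \<open>\<tau>\<^sub>c\<tau>\<^sub>d\<close> divides
  \<open>lcm(\<tau>\<^sub>c\<^sup>2, \<tau>\<^sub>d\<^sup>2)\<close>. Minimality holds because deleting a vertex from a face always
  lowers the label: each vertex label contains some variable \<open>x\<^sub>\<pi>\<close> to a higher power than
  all other labels of the face. Finally, the image of the first differential is generated by
  the vertex labels \<open>\<tau>\<^sub>i\<tau>\<^sub>j\<close>, that is, it is \<open>\<T>\<^sub>q\<^sup>2\<close>.\<close>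

section \<open>Exponent vectors and lcm labels\<close>

definition exp_dvd :: "('x \<Rightarrow>\<^sub>0 nat) \<Rightarrow> ('x \<Rightarrow>\<^sub>0 nat) \<Rightarrow> bool" (infix \<open>\<preceq>\<close> 50) where
  "a \<preceq> b \<longleftrightarrow> (\<forall>x. Poly_Mapping.lookup a x \<le> Poly_Mapping.lookup b x)"

lemma exp_dvd_trans: "a \<preceq> b \<Longrightarrow> b \<preceq> c \<Longrightarrow> a \<preceq> c"
  unfolding exp_dvd_def using order_trans by blast

lemma exp_dvd_diff_add: "a \<preceq> b \<Longrightarrow> b - a + a = b"
  unfolding exp_dvd_def by (intro poly_mapping_eqI) (simp add: lookup_add lookup_minus)

lemma exp_dvd_add_left: "a \<preceq> b + a"
  unfolding exp_dvd_def by (simp add: lookup_add)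

lemma add_diff_cancel_exp: "b + a - a = (b :: 'x \<Rightarrow>\<^sub>0 nat)"
  by (intro poly_mapping_eqI) (simp add: lookup_add lookup_minus)

lemma mono_add_exp: "(mono (a + b) :: ('x, 'k::comm_ring_1) mpoly) = mono a * mono b"
  unfolding mono_def by (simp add: mult_single)

lemma lookup_mono_mult:
  fixes p :: "('x, 'k::comm_ring_1) mpoly"
  shows "Poly_Mapping.lookup (mono d * p) e = (if d \<preceq> e then Poly_Mapping.lookup p (e - d) else 0)"
proof -
  have split: "e = d + c \<longleftrightarrow> d \<preceq> e \<and> c = e - d" for c
    unfolding exp_dvd_def poly_mapping_eq_iff by (auto simp: fun_eq_iff lookup_add lookup_minus)
  have "Poly_Mapping.lookup (mono d * p) e
      = (\<Sum>l. Poly_Mapping.lookup (mono d) l * (\<Sum>c. Poly_Mapping.lookup p c when e = l + c))"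
    by (rule lookup_mult)
  also have "\<dots> = (\<Sum>l. (\<Sum>c. Poly_Mapping.lookup p c when e = l + c) when l = d)"
    by (rule Sum_any.cong) (simp add: mono_def lookup_single when_def)
  also have "\<dots> = (\<Sum>c. Poly_Mapping.lookup p c when e = d + c)"
    by simp
  also have "\<dots> = (if d \<preceq> e then Poly_Mapping.lookup p (e - d) else 0)"
    by (simp add: split when_def)
  finally show ?thesis .
qed

lemma lookup_neg_one_power_mult:
  "Poly_Mapping.lookup ((-1) ^ n * p) e = (-1) ^ n * Poly_Mapping.lookup (p :: ('x, 'k::comm_ring_1) mpoly) e"
  by (induction n) simp_all

lemma lookup_face_label:
  assumes "finite \<tau>"
  shows "Poly_Mapping.lookup (face_label lab \<tau>) x = Max (insert 0 ((\<lambda>v. Poly_Mapping.lookup (lab v) x) ` \<tau>))"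
proof -
  have "{x. Max (insert 0 ((\<lambda>v. Poly_Mapping.lookup (lab v) x) ` \<tau>)) \<noteq> 0}
      \<subseteq> (\<Union>v\<in>\<tau>. Poly_Mapping.keys (lab v))"
    using assms by (auto simp: in_keys_iff Max_eq_iff)
  then have "finite {x. Max (insert 0 ((\<lambda>v. Poly_Mapping.lookup (lab v) x) ` \<tau>)) \<noteq> 0}"
    by (rule finite_subset) (use assms in auto)
  then show ?thesis unfolding face_label_def by simp
qed

lemma face_label_mono: "\<sigma> \<subseteq> \<tau> \<Longrightarrow> finite \<tau> \<Longrightarrow> face_label lab \<sigma> \<preceq> face_label lab \<tau>"
  unfolding exp_dvd_def by (auto simp: lookup_face_label finite_subset intro!: Max_mono)

lemma label_dvd_face_label: "v \<in> \<tau> \<Longrightarrow> finite \<tau> \<Longrightarrow> lab v \<preceq> face_label lab \<tau>"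
  unfolding exp_dvd_def by (auto simp: lookup_face_label)

lemma face_label_least:
  "finite \<tau> \<Longrightarrow> (\<And>v. v \<in> \<tau> \<Longrightarrow> lab v \<preceq> b) \<Longrightarrow> face_label lab \<tau> \<preceq> b"
  unfolding exp_dvd_def by (auto simp: lookup_face_label)

lemma face_label_empty [simp]: "face_label lab {} = 0"
  by (rule poly_mapping_eqI) (simp add: lookup_face_label)

lemma face_label_singleton [simp]: "face_label lab {v} = lab v"
  by (rule poly_mapping_eqI) (simp add: lookup_face_label)

section \<open>Multidegree strands of the homogenized complex\<close>

definition simplicial_boundary :: "'v::linorder set set \<Rightarrow> ('v set \<Rightarrow> 'k::comm_ring_1) \<Rightarrow> 'v set \<Rightarrow> 'k" where
  "simplicial_boundary \<Delta> \<psi> \<sigma> = (\<Sum>\<tau> \<in> {\<tau> \<in> \<Delta>. \<sigma> \<subseteq> \<tau> \<and> card \<tau> = Suc (card \<sigma>)}.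
        (-1) ^ card {w \<in> \<sigma>. w < the_elem (\<tau> - \<sigma>)} * \<psi> \<tau>)"

lemma simplicial_boundary_zero [simp]: "simplicial_boundary \<Delta> (\<lambda>_. 0) = (\<lambda>_. 0)"
  by (simp add: simplicial_boundary_def fun_eq_iff)

lemma codim_one_cofaces:
  assumes "finite G"
  shows "{\<tau> \<in> \<Delta>. G \<subseteq> \<tau> \<and> card \<tau> = Suc (card G)} = (\<lambda>v. insert v G) ` {v. v \<notin> G \<and> insert v G \<in> \<Delta>}"
proof (intro equalityI subsetI)
  fix \<tau> assume \<tau>: "\<tau> \<in> {\<tau> \<in> \<Delta>. G \<subseteq> \<tau> \<and> card \<tau> = Suc (card G)}"
  then have "card (\<tau> - G) = 1"
    using assms by (simp add: card_Diff_subset)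
  then obtain v where "\<tau> - G = {v}" by (rule card_1_singletonE)
  then have "\<tau> = insert v G" "v \<notin> G" using \<tau> by blast+
  then show "\<tau> \<in> (\<lambda>v. insert v G) ` {v. v \<notin> G \<and> insert v G \<in> \<Delta>}"
    using \<tau> by blast
qed (use assms in auto)

lemma simplicial_boundary_vertex_form:
  assumes "finite G"
  shows "simplicial_boundary \<Delta> \<psi> G =
    (\<Sum>v \<in> {v. v \<notin> G \<and> insert v G \<in> \<Delta>}. (-1) ^ card {w \<in> G. w < v} * \<psi> (insert v G))"
proof -
  have "inj_on (\<lambda>v. insert v G) {v. v \<notin> G \<and> insert v G \<in> \<Delta>}"
    by (auto simp: inj_on_def)
  moreover have "the_elem (insert v G - G) = v" if "v \<notin> G" for v
    using that by (simp add: insert_Diff_if)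
  ultimately show ?thesis
    unfolding simplicial_boundary_def codim_one_cofaces[OF assms] by (simp add: sum.reindex)
qed

lemma cycle_on_single_face_eq_zero:
  assumes "finite \<Delta>" "simplicial_boundary \<Delta> \<psi> = (\<lambda>_. 0)"
    and \<sigma>: "\<sigma> \<in> \<Delta>" "finite \<sigma>" "v \<in> \<sigma>"
    and supp: "\<And>\<tau>. \<psi> \<tau> \<noteq> 0 \<Longrightarrow> \<tau> = \<sigma>"
  shows "\<psi> \<sigma> = 0"
proof -
  let ?G = "\<sigma> - {v}"
  let ?term = "\<lambda>\<tau>. (-1) ^ card {w \<in> ?G. w < the_elem (\<tau> - ?G)} * \<psi> \<tau>"
  have "0 = simplicial_boundary \<Delta> \<psi> ?G"
    using assms(2) by simp
  also have "\<dots> = (\<Sum>\<tau> \<in> {\<sigma>}. ?term \<tau>)"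
    unfolding simplicial_boundary_def
  proof (rule sum.mono_neutral_right)
    show "{\<sigma>} \<subseteq> {\<tau> \<in> \<Delta>. ?G \<subseteq> \<tau> \<and> card \<tau> = Suc (card ?G)}"
      using \<sigma> card_Suc_Diff1[of \<sigma> v] by auto
    show "\<forall>\<tau> \<in> {\<tau> \<in> \<Delta>. ?G \<subseteq> \<tau> \<and> card \<tau> = Suc (card ?G)} - {\<sigma>}. ?term \<tau> = 0"
    proof
      fix \<tau> assume "\<tau> \<in> {\<tau> \<in> \<Delta>. ?G \<subseteq> \<tau> \<and> card \<tau> = Suc (card ?G)} - {\<sigma>}"
      then have "\<psi> \<tau> = 0"
        using supp by blast
      then show "?term \<tau> = 0" by simp
    qed
  qed (use assms(1) in simp)
  finally have "(-1) ^ card {w \<in> ?G. w < the_elem (\<sigma> - ?G)} * \<psi> \<sigma> = 0"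
    by simp
  then show ?thesis
    by (metis left_minus_one_mult_self mult_zero_right)
qed

text \<open>The component of multidegree \<open>b\<close> of a homogenized chain, as a chain with coefficients
  in \<open>'k\<close>: the basis element of the face \<open>\<tau>\<close> sits in multidegree \<open>m\<^sub>\<tau>\<close>.\<close>

definition strand ::
  "('v \<Rightarrow> ('x \<Rightarrow>\<^sub>0 nat)) \<Rightarrow> ('v set \<Rightarrow> ('x, 'k::comm_ring_1) mpoly) \<Rightarrow> ('x \<Rightarrow>\<^sub>0 nat) \<Rightarrow> 'v set \<Rightarrow> 'k"
  where "strand lab f b \<tau> =
    (if face_label lab \<tau> \<preceq> b then Poly_Mapping.lookup (f \<tau>) (b - face_label lab \<tau>) else 0)"

lemma lookup_eq_strand: "Poly_Mapping.lookup (f \<tau>) e = strand lab f (e + face_label lab \<tau>) \<tau>"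
  unfolding strand_def by (simp add: exp_dvd_add_left add_diff_cancel_exp)

lemma strand_nonzeroD: "strand lab f b \<tau> \<noteq> 0 \<Longrightarrow> face_label lab \<tau> \<preceq> b \<and> f \<tau> \<noteq> 0"
  unfolding strand_def by (auto split: if_splits)

lemma strand_zero [simp]: "strand lab (\<lambda>_. 0) b = (\<lambda>_. 0)"
  by (simp add: strand_def fun_eq_iff)

lemma eq_if_strands_eq: "(\<And>b. strand lab f b = strand lab g b) \<Longrightarrow> f = g"
  by (intro ext poly_mapping_eqI) (metis lookup_eq_strand)

lemma strand_bps_diff:
  fixes h :: "'v::linorder set \<Rightarrow> ('x, 'k::comm_ring_1) mpoly"
  assumes fin: "\<And>\<tau>. \<tau> \<in> \<Delta> \<Longrightarrow> finite \<tau>"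
  shows "strand lab (bps_diff \<Delta> lab h) b = simplicial_boundary \<Delta> (strand lab h b)"
proof
  fix \<sigma>
  let ?m = "face_label lab"
  let ?S = "{\<tau> \<in> \<Delta>. \<sigma> \<subseteq> \<tau> \<and> card \<tau> = Suc (card \<sigma>)}"
  have below: "?m \<sigma> \<preceq> ?m \<tau>" if "\<tau> \<in> ?S" for \<tau>
    using that fin by (auto intro: face_label_mono)
  show "strand lab (bps_diff \<Delta> lab h) b \<sigma> = simplicial_boundary \<Delta> (strand lab h b) \<sigma>"
  proof (cases "?m \<sigma> \<preceq> b")
    case True
    have "Poly_Mapping.lookup (mono (?m \<tau> - ?m \<sigma>) * h \<tau>) (b - ?m \<sigma>) = strand lab h b \<tau>"
      if "\<tau> \<in> ?S" for \<tau>
    proof -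
      have "?m \<tau> - ?m \<sigma> \<preceq> b - ?m \<sigma> \<longleftrightarrow> ?m \<tau> \<preceq> b"
        using below[OF that] True unfolding exp_dvd_def by (simp add: lookup_minus le_diff_iff)
      moreover have "b - ?m \<sigma> - (?m \<tau> - ?m \<sigma>) = b - ?m \<tau>"
        using below[OF that] True unfolding exp_dvd_def by (intro poly_mapping_eqI) (auto simp: lookup_minus)
      ultimately show ?thesis by (simp add: lookup_mono_mult strand_def)
    qed
    then show ?thesis
      using True unfolding strand_def[of _ _ _ \<sigma>] bps_diff_def simplicial_boundary_def
      by (auto simp: lookup_sum mult.assoc lookup_neg_one_power_mult intro!: sum.cong)
  next
    case False
    have "strand lab h b \<tau> = 0" if "\<tau> \<in> ?S" for \<tau>
      using False below[OF that] strand_nonzeroD exp_dvd_trans by blast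
    then show ?thesis
      using False unfolding strand_def[of _ _ _ \<sigma>] simplicial_boundary_def by simp
  qed
qed

definition faces_below :: "'v set set \<Rightarrow> ('v \<Rightarrow> ('x \<Rightarrow>\<^sub>0 nat)) \<Rightarrow> ('x \<Rightarrow>\<^sub>0 nat) \<Rightarrow> 'v set set" where
  "faces_below \<Delta> lab b = {\<tau> \<in> \<Delta>. face_label lab \<tau> \<preceq> b}"

lemma chain_on_zero [simp]: "chain_on \<Delta> k (\<lambda>_. 0)"
  by (simp add: chain_on_def)

lemma chain_on_strand: "chain_on \<Delta> k f \<Longrightarrow> chain_on (faces_below \<Delta> lab b) k (strand lab f b)"
  unfolding chain_on_def faces_below_def by (metis (mono_tags, lifting) mem_Collect_eq strand_nonzeroD)

lemma chain_on_if_strands: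
  assumes "\<And>b. chain_on (faces_below \<Delta> lab b) k (strand lab g b)"
  shows "chain_on \<Delta> k g"
  unfolding chain_on_def
proof (intro allI impI)
  fix \<tau> assume "g \<tau> \<noteq> 0"
  then obtain e where "Poly_Mapping.lookup (g \<tau>) e \<noteq> 0"
    by (metis lookup_zero poly_mapping_eqI)
  then have "strand lab g (e + face_label lab \<tau>) \<tau> \<noteq> 0"
    by (simp add: lookup_eq_strand[of g \<tau> e lab])
  then show "\<tau> \<in> \<Delta> \<and> card \<tau> = k"
    using assms unfolding chain_on_def faces_below_def by blast
qed

lemma finite_strand_support:
  assumes "finite \<Delta>" "\<And>\<tau>. f \<tau> \<noteq> 0 \<Longrightarrow> \<tau> \<in> \<Delta>"
  shows "finite {b. strand lab f b \<noteq> (\<lambda>_. 0)}"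
proof (rule finite_subset)
  show "{b. strand lab f b \<noteq> (\<lambda>_. 0)} \<subseteq> (\<Union>\<tau>\<in>\<Delta>. (\<lambda>e. e + face_label lab \<tau>) ` Poly_Mapping.keys (f \<tau>))"
  proof
    fix b assume "b \<in> {b. strand lab f b \<noteq> (\<lambda>_. 0)}"
    then obtain \<tau> where \<tau>: "strand lab f b \<tau> \<noteq> 0" by auto
    then have "face_label lab \<tau> \<preceq> b" "\<tau> \<in> \<Delta>"
      using strand_nonzeroD assms(2) by blast+
    moreover have "b - face_label lab \<tau> \<in> Poly_Mapping.keys (f \<tau>)"
      using \<tau> by (auto simp: strand_def in_keys_iff split: if_splits)
    ultimately show "b \<in> (\<Union>\<tau>\<in>\<Delta>. (\<lambda>e. e + face_label lab \<tau>) ` Poly_Mapping.keys (f \<tau>))"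
      by (auto intro!: bexI[of _ \<tau>] image_eqI[of b _ "b - face_label lab \<tau>"] simp: exp_dvd_diff_add)
  qed
qed (use assms(1) in auto)

lemma exists_chain_with_strands:
  fixes \<Phi> :: "('x \<Rightarrow>\<^sub>0 nat) \<Rightarrow> 'v set \<Rightarrow> 'k::comm_ring_1"
  assumes fin: "finite {b. \<Phi> b \<noteq> (\<lambda>_. 0)}"
    and deg: "\<And>b \<tau>. \<Phi> b \<tau> \<noteq> 0 \<Longrightarrow> face_label lab \<tau> \<preceq> b"
  shows "\<exists>g. \<forall>b. strand lab g b = \<Phi> b"
proof -
  define g where "g \<tau> = Abs_poly_mapping (\<lambda>e. \<Phi> (e + face_label lab \<tau>) \<tau>)" for \<tau>
  have "Poly_Mapping.lookup (g \<tau>) = (\<lambda>e. \<Phi> (e + face_label lab \<tau>) \<tau>)" for \<tau>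
  proof -
    have "{e. \<Phi> (e + face_label lab \<tau>) \<tau> \<noteq> 0} \<subseteq> (\<lambda>b. b - face_label lab \<tau>) ` {b. \<Phi> b \<noteq> (\<lambda>_. 0)}"
    proof
      fix e assume "e \<in> {e. \<Phi> (e + face_label lab \<tau>) \<tau> \<noteq> 0}"
      then show "e \<in> (\<lambda>b. b - face_label lab \<tau>) ` {b. \<Phi> b \<noteq> (\<lambda>_. 0)}"
        by (intro image_eqI[of _ _ "e + face_label lab \<tau>"]) (auto simp: add_diff_cancel_exp)
    qed
    then have "finite {e. \<Phi> (e + face_label lab \<tau>) \<tau> \<noteq> 0}"
      using fin finite_subset by blast
    then show ?thesis unfolding g_def by simp
  qed
  then have "strand lab g b \<tau> = \<Phi> b \<tau>" for b \<tau>
    using deg[of b \<tau>] by (auto simp: strand_def exp_dvd_diff_add)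
  then show ?thesis by blast
qed

text \<open>One direction of the Bayer--Peeva--Sturmfels criterion.\<close>

lemma bps_exact_if_strands_exact:
  fixes f :: "'v::linorder set \<Rightarrow> ('x, 'k::comm_ring_1) mpoly"
  assumes fin: "finite \<Delta>" "\<And>\<tau>. \<tau> \<in> \<Delta> \<Longrightarrow> finite \<tau>"
    and strands_exact: "\<And>b (\<psi> :: 'v set \<Rightarrow> 'k). chain_on (faces_below \<Delta> lab b) k \<psi> \<Longrightarrow>
      simplicial_boundary \<Delta> \<psi> = (\<lambda>_. 0) \<Longrightarrow>
      \<exists>\<phi>. chain_on (faces_below \<Delta> lab b) (Suc k) \<phi> \<and> simplicial_boundary \<Delta> \<phi> = \<psi>"
    and f: "chain_on \<Delta> k f" "bps_diff \<Delta> lab f = (\<lambda>_. 0)"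
  shows "\<exists>g. chain_on \<Delta> (Suc k) g \<and> bps_diff \<Delta> lab g = f"
proof -
  let ?P = "\<lambda>b \<phi>. chain_on (faces_below \<Delta> lab b) (Suc k) \<phi> \<and> simplicial_boundary \<Delta> \<phi> = strand lab f b"
  \<comment> \<open>Zero strands get zero preimages, so that only finitely many strands of \<open>g\<close> are nonzero.\<close>
  define \<Phi> where "\<Phi> b = (if strand lab f b = (\<lambda>_. 0) then (\<lambda>_. 0) else Eps (?P b))" for b
  have \<Phi>: "?P b (\<Phi> b)" for b
  proof (cases "strand lab f b = (\<lambda>_. 0)")
    case False
    have "simplicial_boundary \<Delta> (strand lab f b) = (\<lambda>_. 0)"
      using f(2) by (simp flip: strand_bps_diff[OF fin(2)])
    then have "\<exists>\<phi>. ?P b \<phi>"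
      using strands_exact[OF chain_on_strand[OF f(1)]] by blast
    then show ?thesis
      using False unfolding \<Phi>_def by (simp only: if_False) (rule someI_ex[of "?P b"])
  qed (simp add: \<Phi>_def)
  have "finite {b. strand lab f b \<noteq> (\<lambda>_. 0)}"
    using f(1) by (intro finite_strand_support[OF fin(1)]) (auto simp: chain_on_def)
  then have "finite {b. \<Phi> b \<noteq> (\<lambda>_. 0)}"
    by (rule rev_finite_subset) (auto simp: \<Phi>_def)
  moreover have "face_label lab \<tau> \<preceq> b" if "\<Phi> b \<tau> \<noteq> 0" for b \<tau>
    using \<Phi>[of b] that unfolding chain_on_def faces_below_def by blast
  ultimately obtain g where g: "\<And>b. strand lab g b = \<Phi> b"
    using exists_chain_with_strands by metis
  have "chain_on \<Delta> (Suc k) g"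
    using \<Phi> by (intro chain_on_if_strands[where lab = lab]) (simp add: g)
  moreover have "bps_diff \<Delta> lab g = f"
    using \<Phi> by (intro eq_if_strands_eq[where lab = lab]) (simp add: strand_bps_diff[OF fin(2)] g)
  ultimately show ?thesis by blast
qed

lemma bps_diff_constant_coeff_eq_zero:
  assumes fin: "\<And>\<tau>. \<tau> \<in> \<Delta> \<Longrightarrow> finite \<tau>"
    and strict: "\<And>\<tau> v. \<tau> \<in> \<Delta> \<Longrightarrow> v \<in> \<tau> \<Longrightarrow> face_label lab (\<tau> - {v}) \<noteq> face_label lab \<tau>"
  shows "Poly_Mapping.lookup (bps_diff \<Delta> lab f \<sigma>) 0 = 0"
  unfolding bps_diff_def lookup_sum
proof (intro sum.neutral ballI)
  fix \<tau> assume "\<tau> \<in> {\<tau> \<in> \<Delta>. \<sigma> \<subseteq> \<tau> \<and> card \<tau> = Suc (card \<sigma>)}"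
  moreover from this have "finite \<sigma>"
    using fin finite_subset by blast
  ultimately obtain v where v: "\<tau> = insert v \<sigma>" "v \<notin> \<sigma>" "\<tau> \<in> \<Delta>"
    unfolding codim_one_cofaces[OF \<open>finite \<sigma>\<close>] by blast
  then have "face_label lab \<sigma> \<preceq> face_label lab \<tau>" "face_label lab \<sigma> \<noteq> face_label lab \<tau>"
    using fin strict[of \<tau> v] by (auto intro: face_label_mono)
  then have "\<not> face_label lab \<tau> - face_label lab \<sigma> \<preceq> 0"
    unfolding exp_dvd_def by (auto simp: lookup_minus poly_mapping_eq_iff fun_eq_iff intro: antisym)
  then show "Poly_Mapping.lookup ((-1) ^ card {w \<in> \<sigma>. w < the_elem (\<tau> - \<sigma>)} *
      mono (face_label lab \<tau> - face_label lab \<sigma>) * f \<tau>) 0 = 0"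
    by (simp add: mult.assoc lookup_neg_one_power_mult lookup_mono_mult)
qed

section \<open>Cones are acyclic\<close>

lemma finite_vertex_extensions:
  assumes "finite \<Delta>" "\<And>\<tau>. \<tau> \<in> \<Delta> \<Longrightarrow> finite \<tau>"
  shows "finite {v. v \<notin> G \<and> insert v G \<in> \<Delta>}"
  by (rule finite_subset[of _ "\<Union>\<Delta>"]) (use assms in auto)

lemma card_less_insert:
  "finite H \<Longrightarrow> x \<notin> H \<Longrightarrow> card {w \<in> insert x H. w < y} = card {w \<in> H. w < y} + (if x < y then 1 else 0)"
proof -
  assume "finite H" "x \<notin> H"
  moreover have "{w \<in> insert x H. w < y} = (if x < y then insert x {w \<in> H. w < y} else {w \<in> H. w < y})"
    by auto
  ultimately show ?thesis by simp
qed

lemma sign_swap: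
  fixes a v :: "'v::linorder"
  assumes "finite H" "a \<notin> H" "v \<notin> H" "v \<noteq> a"
  shows "((-1) ^ card {w \<in> insert a H. w < v} * (-1) ^ card {w \<in> insert v H. w < a} :: 'k::comm_ring_1)
     = - ((-1) ^ card {w \<in> H. w < a} * (-1) ^ card {w \<in> H. w < v})"
  using assms(4) unfolding card_less_insert[OF assms(1,2)] card_less_insert[OF assms(1,3)]
  by (cases "a < v") (auto simp: power_add)

definition cone_contraction :: "'v::linorder \<Rightarrow> ('v set \<Rightarrow> 'k::comm_ring_1) \<Rightarrow> 'v set \<Rightarrow> 'k" where
  "cone_contraction a \<psi> G = (if a \<in> G then (-1) ^ card {w \<in> G - {a}. w < a} * \<psi> (G - {a}) else 0)"

lemma simplicial_boundary_cone_contraction_apex_notin: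
  assumes fin: "finite \<Delta>" "\<And>\<tau>. \<tau> \<in> \<Delta> \<Longrightarrow> finite \<tau>"
    and G: "finite G" "insert a G \<in> \<Delta>" "a \<notin> G"
  shows "simplicial_boundary \<Delta> (cone_contraction a \<psi>) G = \<psi> G"
proof -
  let ?U = "{v. v \<notin> G \<and> insert v G \<in> \<Delta>}"
  let ?term = "\<lambda>v. (-1) ^ card {w \<in> G. w < v} * cone_contraction a \<psi> (insert v G)"
  have "simplicial_boundary \<Delta> (cone_contraction a \<psi>) G = (\<Sum>v \<in> ?U. ?term v)"
    using G(1) by (rule simplicial_boundary_vertex_form)
  also have "\<dots> = (\<Sum>v \<in> {a}. ?term v)"
    using finite_vertex_extensions[OF fin] G
    by (intro sum.mono_neutral_right) (auto simp: cone_contraction_def)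
  also have "\<dots> = \<psi> G"
    using G by (simp add: cone_contraction_def mult.assoc[symmetric] power_add[symmetric])
  finally show ?thesis .
qed

lemma cone_vertex_extensions:
  assumes down: "\<And>\<tau> \<rho>. \<tau> \<in> \<Delta> \<Longrightarrow> \<rho> \<subseteq> \<tau> \<Longrightarrow> \<rho> \<in> \<Delta>"
    and cone: "\<And>\<tau>. \<tau> \<in> \<Delta> \<Longrightarrow> insert a \<tau> \<in> \<Delta>"
    and H: "insert a H \<in> \<Delta>" "a \<notin> H"
  shows "{v. v \<notin> H \<and> insert v H \<in> \<Delta>} = insert a {v. v \<notin> insert a H \<and> insert v (insert a H) \<in> \<Delta>}"
proof (intro equalityI subsetI)
  fix v assume v: "v \<in> {v. v \<notin> H \<and> insert v H \<in> \<Delta>}"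
  show "v \<in> insert a {v. v \<notin> insert a H \<and> insert v (insert a H) \<in> \<Delta>}"
  proof (cases "v = a")
    case False
    then show ?thesis
      using cone[of "insert v H"] v by (auto simp: insert_commute)
  qed simp
next
  fix v assume "v \<in> insert a {v. v \<notin> insert a H \<and> insert v (insert a H) \<in> \<Delta>}"
  then show "v \<in> {v. v \<notin> H \<and> insert v H \<in> \<Delta>}"
    using H down[of "insert v (insert a H)" "insert v H"] by auto
qed

lemma simplicial_boundary_cone_contraction_apex_in:
  fixes \<psi> :: "'v::linorder set \<Rightarrow> 'k::comm_ring_1"
  assumes fin: "finite \<Delta>" "\<And>\<tau>. \<tau> \<in> \<Delta> \<Longrightarrow> finite \<tau>"
    and down: "\<And>\<tau> \<rho>. \<tau> \<in> \<Delta> \<Longrightarrow> \<rho> \<subseteq> \<tau> \<Longrightarrow> \<rho> \<in> \<Delta>"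
    and cone: "\<And>\<tau>. \<tau> \<in> \<Delta> \<Longrightarrow> insert a \<tau> \<in> \<Delta>"
    and H: "insert a H \<in> \<Delta>" "a \<notin> H"
    and cycle: "simplicial_boundary \<Delta> \<psi> H = 0"
  shows "simplicial_boundary \<Delta> (cone_contraction a \<psi>) (insert a H) = \<psi> (insert a H)"
proof -
  define G where "G = insert a H"
  define U where "U = {v. v \<notin> G \<and> insert v G \<in> \<Delta>}"
  have fin_GH: "finite G" "finite H"
    using fin(2)[OF H(1)] unfolding G_def by auto
  \<comment> \<open>The cycle condition at \<open>H\<close> expresses the terms of the sum below through \<open>\<psi> G\<close>.\<close>
  have "0 = (\<Sum>v \<in> insert a U. (-1) ^ card {w \<in> H. w < v} * \<psi> (insert v H))"
    using cycle cone_vertex_extensions[OF down cone H] fin_GH(2)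
    unfolding U_def G_def by (simp add: simplicial_boundary_vertex_form)
  also have "\<dots> = (-1) ^ card {w \<in> H. w < a} * \<psi> G + (\<Sum>v \<in> U. (-1) ^ card {w \<in> H. w < v} * \<psi> (insert v H))"
    using finite_vertex_extensions[OF fin, of G] unfolding U_def G_def by simp
  finally have sum_U: "(\<Sum>v \<in> U. (-1) ^ card {w \<in> H. w < v} * \<psi> (insert v H))
      = - ((-1) ^ card {w \<in> H. w < a} * \<psi> G)"
    by (simp add: eq_neg_iff_add_eq_0 add.commute)
  have "simplicial_boundary \<Delta> (cone_contraction a \<psi>) G
      = (\<Sum>v \<in> U. (-1) ^ card {w \<in> G. w < v} * cone_contraction a \<psi> (insert v G))"
    unfolding U_def by (rule simplicial_boundary_vertex_form[OF fin_GH(1)])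
  also have "\<dots> = - ((-1) ^ card {w \<in> H. w < a}) * (\<Sum>v \<in> U. (-1) ^ card {w \<in> H. w < v} * \<psi> (insert v H))"
    unfolding sum_distrib_left
  proof (rule sum.cong[OF refl])
    fix v assume "v \<in> U"
    then have v: "v \<notin> H" "v \<noteq> a" "insert v G - {a} = insert v H"
      using H unfolding U_def G_def by auto
    show "(-1) ^ card {w \<in> G. w < v} * cone_contraction a \<psi> (insert v G)
        = - ((-1) ^ card {w \<in> H. w < a}) * ((-1) ^ card {w \<in> H. w < v} * \<psi> (insert v H))"
      using sign_swap[OF fin_GH(2) H(2) v(1,2), where 'k = 'k] v
      by (simp add: G_def cone_contraction_def mult.assoc[symmetric])
  qed
  also have "\<dots> = \<psi> G"
    unfolding sum_U by (simp add: mult.assoc[symmetric] power_add[symmetric])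
  finally show ?thesis
    unfolding G_def .
qed

lemma simplicial_boundary_cone_contraction:
  assumes fin: "finite \<Delta>" "\<And>\<tau>. \<tau> \<in> \<Delta> \<Longrightarrow> finite \<tau>"
    and down: "\<And>\<tau> \<rho>. \<tau> \<in> \<Delta> \<Longrightarrow> \<rho> \<subseteq> \<tau> \<Longrightarrow> \<rho> \<in> \<Delta>"
    and cone: "\<And>\<tau>. \<tau> \<in> \<Delta> \<Longrightarrow> insert a \<tau> \<in> \<Delta>"
    and supp: "\<And>\<tau>. \<psi> \<tau> \<noteq> 0 \<Longrightarrow> \<tau> \<in> \<Delta>"
    and cycle: "simplicial_boundary \<Delta> \<psi> = (\<lambda>_. 0)"
  shows "simplicial_boundary \<Delta> (cone_contraction a \<psi>) = \<psi>"
proof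
  fix G
  show "simplicial_boundary \<Delta> (cone_contraction a \<psi>) G = \<psi> G"
  proof (cases "G \<in> \<Delta>")
    case False
    then have no_cofaces: "{\<tau> \<in> \<Delta>. G \<subseteq> \<tau> \<and> card \<tau> = Suc (card G)} = {}"
      using down by blast
    show ?thesis
      using False supp unfolding simplicial_boundary_def no_cofaces by force
  next
    case G: True
    show ?thesis
    proof (cases "a \<in> G")
      case False
      then show ?thesis
        using G cone fin(2) by (intro simplicial_boundary_cone_contraction_apex_notin[OF fin]) auto
    next
      case True
      then have "G = insert a (G - {a})"
        by blast
      moreover have "simplicial_boundary \<Delta> (cone_contraction a \<psi>) (insert a (G - {a})) = \<psi> (insert a (G - {a}))"
        using G cycle \<open>a \<in> G\<close> by (intro simplicial_boundary_cone_contraction_apex_in[OF fin down cone])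
          (auto simp: insert_absorb)
      ultimately show ?thesis
        by simp
    qed
  qed
qed

lemma chain_on_cone_contraction:
  assumes fin: "\<And>\<tau>. \<tau> \<in> \<Delta> \<Longrightarrow> finite \<tau>"
    and cone: "\<And>\<tau>. \<tau> \<in> \<Delta> \<Longrightarrow> insert a \<tau> \<in> \<Delta>"
    and apex: "lab a \<preceq> b"
    and \<psi>: "chain_on (faces_below \<Delta> lab b) k \<psi>"
  shows "chain_on (faces_below \<Delta> lab b) (Suc k) (cone_contraction a \<psi>)"
  unfolding chain_on_def
proof (intro allI impI)
  fix \<tau> assume "cone_contraction a \<psi> \<tau> \<noteq> 0"
  then have "a \<in> \<tau>" and nonzero: "\<psi> (\<tau> - {a}) \<noteq> 0"
    unfolding cone_contraction_def by (auto split: if_splits)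
  define \<sigma> where "\<sigma> = \<tau> - {a}"
  have \<tau>: "\<tau> = insert a \<sigma>" "a \<notin> \<sigma>"
    using \<open>a \<in> \<tau>\<close> unfolding \<sigma>_def by auto
  from nonzero \<psi> have "\<sigma> \<in> \<Delta>" "card \<sigma> = k" "face_label lab \<sigma> \<preceq> b"
    unfolding chain_on_def faces_below_def \<sigma>_def by auto
  moreover from this have "finite \<sigma>"
    using fin by blast
  moreover have "lab v \<preceq> b" if "v \<in> \<tau>" for v
    using that \<tau> apex label_dvd_face_label[of v \<sigma> lab] \<open>face_label lab \<sigma> \<preceq> b\<close> \<open>finite \<sigma>\<close>
    by (auto intro: exp_dvd_trans)
  ultimately show "\<tau> \<in> faces_below \<Delta> lab b \<and> card \<tau> = Suc k"
    using \<tau> cone unfolding faces_below_def by (auto intro: face_label_least)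
qed

section \<open>Ideals as spans\<close>

interpretation ring_module: module "(*) :: 'a::comm_ring_1 \<Rightarrow> 'a \<Rightarrow> 'a"
  by unfold_locales (simp_all add: algebra_simps)

declare ring_module.scale_scale [simp del] \<comment> \<open>it would re-associate products against \<open>mult.assoc\<close>\<close>

lemma ideal_gen_eq_span: "ideal_gen G = ring_module.span G"
  unfolding ideal_gen_def ring_module.span_explicit by blast

lemma range_sum_eq_span:
  fixes h :: "'b \<Rightarrow> 'a::comm_ring_1"
  assumes "finite D"
  shows "range (\<lambda>c. \<Sum>x\<in>D. c x * h x) = ring_module.span (h ` D)"
proof
  show "range (\<lambda>c. \<Sum>x\<in>D. c x * h x) \<subseteq> ring_module.span (h ` D)"
    by (auto intro!: ring_module.span_sum ring_module.span_scale[OF ring_module.span_base])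
  let ?R = "range (\<lambda>c. \<Sum>x\<in>D. c x * h x)"
  have "ring_module.subspace ?R"
  proof (rule ring_module.subspaceI)
    show "0 \<in> ?R"
      using rangeI[of "\<lambda>c. \<Sum>x\<in>D. c x * h x" "\<lambda>_. 0"] by simp
    show "u + v \<in> ?R" if "u \<in> ?R" "v \<in> ?R" for u v
    proof -
      from that obtain c c' where "u = (\<Sum>x\<in>D. c x * h x)" "v = (\<Sum>x\<in>D. c' x * h x)"
        by blast
      then have sum: "u + v = (\<Sum>x\<in>D. (c x + c' x) * h x)"
        by (simp add: sum.distrib distrib_right)
      show ?thesis unfolding sum by (rule rangeI)
    qed
    show "r * u \<in> ?R" if "u \<in> ?R" for r u
    proof -
      from that obtain c where "u = (\<Sum>x\<in>D. c x * h x)"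
        by blast
      then have scaled: "r * u = (\<Sum>x\<in>D. (r * c x) * h x)"
        by (simp add: sum_distrib_left mult.assoc)
      show ?thesis unfolding scaled by (rule rangeI)
    qed
  qed
  moreover have "h x \<in> ?R" if "x \<in> D" for x
  proof -
    have indicator: "h x = (\<Sum>y\<in>D. (if y = x then 1 else 0) * h y)"
      using assms that by (simp add: if_distrib[of "\<lambda>t. t * _"] cong: if_cong)
    show ?thesis unfolding indicator by (rule rangeI)
  qed
  ultimately show "ring_module.span (h ` D) \<subseteq> ?R"
    by (intro ring_module.span_minimal) auto
qed

lemma ideal_prod_ideal_gen:
  "ideal_prod (ideal_gen A) (ideal_gen B) = ideal_gen {a * b | a b. a \<in> A \<and> b \<in> B}"
  unfolding ideal_prod_def ideal_gen_eq_span
proof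
  let ?P = "ring_module.span {a * b | a b. a \<in> A \<and> b \<in> B}"
  have "x * y \<in> ?P" if "x \<in> ring_module.span A" "y \<in> ring_module.span B" for x y
    using that(1)
  proof (induction x rule: ring_module.span_induct_alt)
    case (step c a x)
    from that(2) have "a * y \<in> ?P"
    proof (induction y rule: ring_module.span_induct_alt)
      case (step d b y)
      have "a * b \<in> {a * b | a b. a \<in> A \<and> b \<in> B}"
        using \<open>a \<in> A\<close> \<open>b \<in> B\<close> by blast
      then have "d * (a * b) + a * y \<in> ?P"
        by (rule ring_module.span_add[OF ring_module.span_scale[OF ring_module.span_base] step.IH])
      moreover have "a * (d * b + y) = d * (a * b) + a * y"
        by (simp add: algebra_simps)
      ultimately show ?case by simp
    qed (simp add: ring_module.span_zero)
    then have "c * (a * y) + x * y \<in> ?P"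
      by (rule ring_module.span_add[OF ring_module.span_scale step.IH])
    moreover have "(c * a + x) * y = c * (a * y) + x * y"
      by (simp add: algebra_simps)
    ultimately show ?case by simp
  qed (simp add: ring_module.span_zero)
  then show "ring_module.span {x * y | x y. x \<in> ring_module.span A \<and> y \<in> ring_module.span B} \<subseteq> ?P"
    by (intro ring_module.span_minimal) auto
  show "?P \<subseteq> ring_module.span {x * y | x y. x \<in> ring_module.span A \<and> y \<in> ring_module.span B}"
    by (intro ring_module.span_mono) (auto intro: ring_module.span_base)
qed

lemma augmentation_image:
  fixes lab :: "'v::linorder \<Rightarrow> ('x \<Rightarrow>\<^sub>0 nat)"
  assumes "finite \<Delta>"
  shows "{bps_diff \<Delta> lab f {} | f :: 'v set \<Rightarrow> ('x, 'k::comm_ring_1) mpoly. chain_on \<Delta> 1 f}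
    = ideal_gen ((\<lambda>v. mono (lab v)) ` {v. {v} \<in> \<Delta>})"
proof -
  let ?D = "{\<tau> \<in> \<Delta>. card \<tau> = 1}"
  have singletons: "?D = (\<lambda>v. {v}) ` {v. {v} \<in> \<Delta>}"
    by (auto simp: card_1_singleton_iff)
  have bps_diff_empty: "bps_diff \<Delta> lab f {} = (\<Sum>\<tau> \<in> ?D. f \<tau> * mono (face_label lab \<tau>))"
    for f :: "'v set \<Rightarrow> ('x, 'k) mpoly"
    unfolding bps_diff_def by (simp add: mult.commute)
  have "{bps_diff \<Delta> lab f {} | f :: 'v set \<Rightarrow> ('x, 'k) mpoly. chain_on \<Delta> 1 f}
      = range (\<lambda>c. \<Sum>\<tau> \<in> ?D. c \<tau> * mono (face_label lab \<tau>))"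
  proof (intro equalityI subsetI)
    fix p :: "('x, 'k) mpoly" assume "p \<in> range (\<lambda>c. \<Sum>\<tau> \<in> ?D. c \<tau> * mono (face_label lab \<tau>))"
    then obtain c where p: "p = (\<Sum>\<tau> \<in> ?D. c \<tau> * mono (face_label lab \<tau>))" by blast
    define f where "f \<tau> = (if \<tau> \<in> ?D then c \<tau> else 0)" for \<tau>
    have "chain_on \<Delta> 1 f" "p = bps_diff \<Delta> lab f {}"
      unfolding chain_on_def f_def p bps_diff_empty by auto
    then show "p \<in> {bps_diff \<Delta> lab f {} | f :: 'v set \<Rightarrow> ('x, 'k) mpoly. chain_on \<Delta> 1 f}"
      by blast
  qed (auto simp: bps_diff_empty)
  also have "\<dots> = ring_module.span ((\<lambda>\<tau>. mono (face_label lab \<tau>)) ` ?D)"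
    using assms by (simp add: range_sum_eq_span)
  also have "\<dots> = ideal_gen ((\<lambda>v. mono (lab v)) ` {v. {v} \<in> \<Delta>})"
    unfolding ideal_gen_eq_span singletons image_image by simp
  finally show ?thesis .
qed

section \<open>The complex \<open>\<bbbM>\<^sub>q\<^sup>2\<close>\<close>

lemma M2_complex_subset: "\<tau> \<in> M2_complex q \<Longrightarrow> \<tau> \<subseteq> {1..q} \<times> {1..q}"
  unfolding M2_complex_def M_set_def by auto

lemma finite_M2_complex: "finite (M2_complex q)"
proof -
  have "M2_complex q \<subseteq> Pow ({1..q} \<times> {1..q})"
    using M2_complex_subset by blast
  then show ?thesis by (rule finite_subset) simp
qed

lemma finite_M2_face: "\<tau> \<in> M2_complex q \<Longrightarrow> finite \<tau>"
  using M2_complex_subset finite_subset by blast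

lemma M2_complex_down_closed: "\<tau> \<in> M2_complex q \<Longrightarrow> \<rho> \<subseteq> \<tau> \<Longrightarrow> \<rho> \<in> M2_complex q"
  unfolding M2_complex_def by blast

lemma M2_complex_cone: "a \<in> M_set q \<Longrightarrow> \<tau> \<in> M2_complex q \<Longrightarrow> insert a \<tau> \<in> M2_complex q"
  unfolding M2_complex_def by blast

lemma lookup_tau_exp: "Poly_Mapping.lookup (tau_exp q i) \<pi> = (if \<pi> permutes {1..q} then \<pi> i else 0)"
proof -
  have "finite {\<pi>. \<pi> permutes {1..q}}"
    by (rule finite_permutations) simp
  then have "finite {\<pi>. (if \<pi> permutes {1..q} then \<pi> i else 0) \<noteq> 0}"
    by (rule rev_finite_subset) auto
  then show ?thesis unfolding tau_exp_def by simp
qed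

lemma lookup_M2_label:
  "Poly_Mapping.lookup (M2_label q (i, j)) \<pi> = Poly_Mapping.lookup (tau_exp q i) \<pi> + Poly_Mapping.lookup (tau_exp q j) \<pi>"
  unfolding M2_label_def by (simp add: lookup_add)

lemma lookup_M2_label_permutation:
  "\<pi> permutes {1..q} \<Longrightarrow> Poly_Mapping.lookup (M2_label q (i, j)) \<pi> = \<pi> i + \<pi> j"
  by (simp add: lookup_M2_label lookup_tau_exp)

lemma M2_label_mixed_dvd:
  assumes "M2_label q (c, c) \<preceq> b" "M2_label q (d, d) \<preceq> b"
  shows "M2_label q (min c d, max c d) \<preceq> b"
  unfolding exp_dvd_def
proof
  fix x
  let ?t = "\<lambda>i. Poly_Mapping.lookup (tau_exp q i) x"
  have "?t c + ?t c \<le> Poly_Mapping.lookup b x" "?t d + ?t d \<le> Poly_Mapping.lookup b x"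
    using assms unfolding exp_dvd_def lookup_M2_label by auto
  moreover have "?t (min c d) + ?t (max c d) = ?t c + ?t d"
    by (cases "c \<le> d") (auto simp: min_def max_def)
  ultimately show "Poly_Mapping.lookup (M2_label q (min c d, max c d)) x \<le> Poly_Mapping.lookup b x"
    unfolding lookup_M2_label by linarith
qed

lemma M2_face_below_is_diagonal:
  assumes "\<tau> \<in> faces_below (M2_complex q) (M2_label q) b" "\<tau> \<noteq> {}"
    and no_edge: "\<forall>a \<in> M_set q. \<not> M2_label q a \<preceq> b"
  obtains c where "c \<in> {1..q}" "\<tau> = {(c, c)}"
proof -
  from assms(1) obtain c where c: "c \<in> {1..q}" "\<tau> \<subseteq> insert (c, c) (M_set q)"
    and below: "face_label (M2_label q) \<tau> \<preceq> b"
    unfolding faces_below_def M2_complex_def by blast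
  have "finite \<tau>"
    using assms(1) finite_M2_face unfolding faces_below_def by blast
  have "v \<notin> M_set q" if "v \<in> \<tau>" for v
    using no_edge below label_dvd_face_label[OF that \<open>finite \<tau>\<close>] exp_dvd_trans by blast
  then have "\<tau> = {(c, c)}"
    using c(2) assms(2) by blast
  with c(1) show ?thesis by (rule that)
qed

lemma M2_unique_face_below:
  assumes "\<tau> \<in> faces_below (M2_complex q) (M2_label q) b" "\<tau> \<noteq> {}"
    and "\<tau>' \<in> faces_below (M2_complex q) (M2_label q) b" "\<tau>' \<noteq> {}"
    and no_edge: "\<forall>a \<in> M_set q. \<not> M2_label q a \<preceq> b"
  shows "\<tau> = \<tau>'"
proof -
  obtain c d where c: "c \<in> {1..q}" "\<tau> = {(c, c)}" and d: "d \<in> {1..q}" "\<tau>' = {(d, d)}"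
    using M2_face_below_is_diagonal assms by metis
  have "M2_label q (c, c) \<preceq> b" "M2_label q (d, d) \<preceq> b"
    using assms(1,3) c d unfolding faces_below_def by auto
  then have "M2_label q (min c d, max c d) \<preceq> b"
    by (rule M2_label_mixed_dvd)
  then have "c = d"
    using no_edge c d unfolding M_set_def by (cases "c < d"; cases "d < c") (auto simp: min_def max_def)
  then show ?thesis
    using c d by simp
qed

lemma M2_strands_exact:
  fixes \<psi> :: "(nat \<times> nat) set \<Rightarrow> 'k::comm_ring_1"
  assumes k: "k \<ge> 1"
    and \<psi>: "chain_on (faces_below (M2_complex q) (M2_label q) b) k \<psi>"
    and cycle: "simplicial_boundary (M2_complex q) \<psi> = (\<lambda>_. 0)"
  shows "\<exists>\<phi>. chain_on (faces_below (M2_complex q) (M2_label q) b) (Suc k) \<phi>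
    \<and> simplicial_boundary (M2_complex q) \<phi> = \<psi>"
proof (cases "\<exists>a \<in> M_set q. M2_label q a \<preceq> b")
  case True
  then obtain a where a: "a \<in> M_set q" "M2_label q a \<preceq> b"
    by blast
  have "\<And>\<tau>. \<psi> \<tau> \<noteq> 0 \<Longrightarrow> \<tau> \<in> M2_complex q"
    using \<psi> unfolding chain_on_def faces_below_def by blast
  then have "simplicial_boundary (M2_complex q) (cone_contraction a \<psi>) = \<psi>"
    using cycle finite_M2_complex finite_M2_face M2_complex_down_closed M2_complex_cone[OF a(1)]
    by (intro simplicial_boundary_cone_contraction) auto
  moreover have "chain_on (faces_below (M2_complex q) (M2_label q) b) (Suc k) (cone_contraction a \<psi>)"
    using finite_M2_face M2_complex_cone[OF a(1)] a(2) \<psi> by (rule chain_on_cone_contraction)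
  ultimately show ?thesis by blast
next
  case False
  have "\<psi> \<sigma> = 0" for \<sigma>
  proof (rule ccontr)
    assume "\<psi> \<sigma> \<noteq> 0"
    then have \<sigma>: "\<sigma> \<in> faces_below (M2_complex q) (M2_label q) b" "card \<sigma> = k"
      using \<psi> unfolding chain_on_def by auto
    with k have "\<sigma> \<noteq> {}" by auto
    then obtain v where "v \<in> \<sigma>" by blast
    have "\<tau> = \<sigma>" if "\<psi> \<tau> \<noteq> 0" for \<tau>
      using that \<psi> \<sigma> k \<open>\<sigma> \<noteq> {}\<close> False unfolding chain_on_def
      by (intro M2_unique_face_below) auto
    then have "\<psi> \<sigma> = 0"
      using finite_M2_complex cycle \<sigma>(1) finite_M2_face \<open>v \<in> \<sigma>\<close>
      by (intro cycle_on_single_face_eq_zero) (auto simp: faces_below_def)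
    with \<open>\<psi> \<sigma> \<noteq> 0\<close> show False ..
  qed
  then show ?thesis
    by (intro exI[of _ "\<lambda>_. 0"]) (simp add: fun_eq_iff)
qed

lemma permutation_values_on_edge:
  assumes "\<pi> permutes {1..q}" "(i, j) \<in> M_set q"
  shows "\<pi> i \<in> {1..q}" "\<pi> j \<in> {1..q}" "\<pi> i \<noteq> \<pi> j"
  using assms permutes_in_image[OF assms(1)] permutes_inj[OF assms(1)]
  unfolding M_set_def by (auto dest: injD)

lemma exists_permutation_to_top_two:
  fixes p r q :: nat
  assumes "p \<in> {1..q}" "r \<in> {1..q}" "p \<noteq> r"
  obtains \<pi> where "\<pi> permutes {1..q}" "\<pi> p = q" "\<pi> r = q - 1"
proof
  define r' where "r' = transpose p q r"
  have "r' \<noteq> q" "r' \<in> {1..q}" "q \<ge> 2"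
    using assms unfolding r'_def by (auto simp: transpose_def)
  let ?\<pi> = "transpose r' (q - 1) \<circ> transpose p q"
  show "?\<pi> permutes {1..q}"
    using assms \<open>r' \<in> {1..q}\<close> \<open>q \<ge> 2\<close> by (intro permutes_compose permutes_swap_id) auto
  show "?\<pi> p = q"
    using \<open>r' \<noteq> q\<close> \<open>q \<ge> 2\<close> by (auto simp: transpose_def)
  show "?\<pi> r = q - 1"
    unfolding r'_def by (simp add: transpose_def)
qed

lemma permutation_edge_sum_less:
  assumes "\<pi> permutes {1..q}" "\<pi> p = q" "\<pi> r = q - 1"
    and "(i, j) \<in> M_set q" "{i, j} \<noteq> {p, r}"
  shows "\<pi> i + \<pi> j < 2 * q - 1"
proof -
  have "\<pi> ` {i, j} \<noteq> \<pi> ` {p, r}"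
    using assms(5) by (subst inj_image_eq_iff[OF permutes_inj[OF assms(1)]])
  then have "\<not> (\<pi> i = q \<and> \<pi> j = q - 1) \<and> \<not> (\<pi> i = q - 1 \<and> \<pi> j = q)"
    using assms(2,3) by (auto simp only: image_insert image_empty)
  then show ?thesis
    using permutation_values_on_edge[OF assms(1,4)] by (simp only: atLeastAtMost_iff) arith
qed

text \<open>The variable \<open>x\<^sub>\<pi>\<close> exposing a vertex: for \<open>l\<^sub>c\<^sub>c\<close> take \<open>\<pi>(c) = q\<close>; for
  \<open>l\<^sub>i\<^sub>j\<close> send \<open>{i, j}\<close> to \<open>{q, q - 1}\<close>, with the diagonal index \<open>c\<close> of the facet going
  to \<open>q - 1\<close> if it lies in \<open>{i, j}\<close>.\<close>

lemma M2_diagonal_vertex_exposed: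
  assumes c: "c \<in> {1..q}" "\<tau> \<subseteq> insert (c, c) (M_set q)"
  obtains \<pi> where "\<pi> permutes {1..q}" "\<And>w. w \<in> \<tau> - {(c, c)} \<Longrightarrow>
    Poly_Mapping.lookup (M2_label q w) \<pi> < Poly_Mapping.lookup (M2_label q (c, c)) \<pi>"
proof
  let ?\<pi> = "transpose c q"
  show \<pi>: "?\<pi> permutes {1..q}"
    using c(1) by (intro permutes_swap_id) auto
  fix w assume w: "w \<in> \<tau> - {(c, c)}"
  then obtain i j where w': "w = (i, j)" "(i, j) \<in> M_set q"
    using c(2) by (cases w) auto
  show "Poly_Mapping.lookup (M2_label q w) ?\<pi> < Poly_Mapping.lookup (M2_label q (c, c)) ?\<pi>"
    using permutation_values_on_edge[OF \<pi> w'(2)] w' by (auto simp: lookup_M2_label_permutation[OF \<pi>])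
qed

lemma M2_edge_vertex_exposed:
  assumes c: "c \<in> {1..q}" "\<tau> \<subseteq> insert (c, c) (M_set q)"
    and v: "(i, j) \<in> M_set q"
  obtains \<pi> where "\<pi> permutes {1..q}" "\<And>w. w \<in> \<tau> - {(i, j)} \<Longrightarrow>
    Poly_Mapping.lookup (M2_label q w) \<pi> < Poly_Mapping.lookup (M2_label q (i, j)) \<pi>"
proof -
  define p where "p = (if i = c then j else i)"
  define r where "r = (if i = c then i else j)"
  have pr: "p \<in> {1..q}" "r \<in> {1..q}" "p \<noteq> r" "p \<noteq> c" "{p, r} = {i, j}"
    using v unfolding p_def r_def M_set_def by auto
  obtain \<pi> where \<pi>: "\<pi> permutes {1..q}" "\<pi> p = q" "\<pi> r = q - 1"
    using exists_permutation_to_top_two[OF pr(1-3)] by blast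
  have "\<pi> i + \<pi> j = \<pi> p + \<pi> r"
    using pr(3,5) by (auto simp: doubleton_eq_iff)
  then have v_value: "Poly_Mapping.lookup (M2_label q (i, j)) \<pi> = 2 * q - 1"
    using \<pi> pr(1) by (simp add: lookup_M2_label_permutation)
  have bound: "Poly_Mapping.lookup (M2_label q w) \<pi> < 2 * q - 1" if w: "w \<in> \<tau> - {(i, j)}" for w
  proof (cases "w = (c, c)")
    case True
    have "\<pi> c \<noteq> q"
      using pr(4) \<pi>(2) permutes_inj[OF \<pi>(1)] by (metis injD)
    moreover have "\<pi> c \<in> {1..q}"
      using permutes_in_image[OF \<pi>(1)] c(1) by simp
    ultimately show ?thesis
      using True by (auto simp: lookup_M2_label_permutation[OF \<pi>(1)])
  next
    case False
    then obtain i' j' where w': "w = (i', j')" "(i', j') \<in> M_set q"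
      using w c(2) by (cases w) auto
    have "{i', j'} \<noteq> {i, j}"
    proof
      assume "{i', j'} = {i, j}"
      then have "i' = i \<and> j' = j"
        using w'(2) v unfolding M_set_def by (auto simp: doubleton_eq_iff)
      then show False
        using w w'(1) by simp
    qed
    then show ?thesis
      using permutation_edge_sum_less[OF \<pi> w'(2)] pr(5) w'(1)
      by (simp add: lookup_M2_label_permutation[OF \<pi>(1)])
  qed
  show ?thesis
    using \<pi>(1) by (rule that) (simp only: bound v_value)
qed

lemma M2_vertex_exposed:
  assumes "\<tau> \<in> M2_complex q" "v \<in> \<tau>"
  obtains \<pi> where "\<pi> permutes {1..q}"
    "\<And>w. w \<in> \<tau> - {v} \<Longrightarrow> Poly_Mapping.lookup (M2_label q w) \<pi> < Poly_Mapping.lookup (M2_label q v) \<pi>"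
proof -
  obtain c where c: "c \<in> {1..q}" "\<tau> \<subseteq> insert (c, c) (M_set q)"
    using assms(1) unfolding M2_complex_def by blast
  show ?thesis
  proof (cases "v \<in> M_set q")
    case True
    then obtain i j where "v = (i, j)" "(i, j) \<in> M_set q"
      by (cases v) auto
    with M2_edge_vertex_exposed[OF c] that show ?thesis
      by metis
  next
    case False
    then have "v = (c, c)"
      using assms(2) c(2) by auto
    with M2_diagonal_vertex_exposed[OF c] that show ?thesis
      by metis
  qed
qed

lemma lookup_M2_label_pos:
  assumes "\<pi> permutes {1..q}" "\<tau> \<in> M2_complex q" "v \<in> \<tau>"
  shows "0 < Poly_Mapping.lookup (M2_label q v) \<pi>"
proof -
  obtain i j where "v = (i, j)" "i \<in> {1..q}"
    using M2_complex_subset[OF assms(2)] assms(3) by (cases v) auto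
  then show ?thesis
    using permutes_in_image[OF assms(1), of i] by (simp add: lookup_M2_label_permutation[OF assms(1)])
qed

lemma M2_face_label_delete_vertex:
  assumes "\<tau> \<in> M2_complex q" "v \<in> \<tau>"
  shows "face_label (M2_label q) (\<tau> - {v}) \<noteq> face_label (M2_label q) \<tau>"
proof -
  obtain \<pi> where "\<pi> permutes {1..q}" and \<pi>: "\<And>w. w \<in> \<tau> - {v} \<Longrightarrow>
      Poly_Mapping.lookup (M2_label q w) \<pi> < Poly_Mapping.lookup (M2_label q v) \<pi>"
    using M2_vertex_exposed[OF assms] by blast
  have fin: "finite \<tau>" "finite (\<tau> - {v})"
    using finite_M2_face[OF assms(1)] by auto
  have "Poly_Mapping.lookup (face_label (M2_label q) (\<tau> - {v})) \<pi> < Poly_Mapping.lookup (M2_label q v) \<pi>"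
    using \<pi> fin(2) lookup_M2_label_pos[OF \<open>\<pi> permutes {1..q}\<close> assms] by (auto simp: lookup_face_label)
  moreover have "Poly_Mapping.lookup (M2_label q v) \<pi> \<le> Poly_Mapping.lookup (face_label (M2_label q) \<tau>) \<pi>"
    using label_dvd_face_label[OF assms(2) fin(1), of "M2_label q"] unfolding exp_dvd_def by blast
  ultimately show ?thesis by auto
qed

lemma M2_vertices: "{v. {v} \<in> M2_complex q} = {(i, j). 1 \<le> i \<and> i \<le> j \<and> j \<le> q}"
proof (intro equalityI subsetI)
  fix v assume "v \<in> {v. {v} \<in> M2_complex q}"
  then show "v \<in> {(i, j). 1 \<le> i \<and> i \<le> j \<and> j \<le> q}"
    unfolding M2_complex_def M_set_def by auto
next
  fix v assume "v \<in> {(i, j). 1 \<le> i \<and> i \<le> j \<and> j \<le> q}"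
  then obtain i j where "v = (i, j)" "1 \<le> i" "i \<le> j" "j \<le> q"
    by blast
  then have "{v} \<subseteq> insert (i, i) (M_set q)" "i \<in> {1..q}"
    unfolding M_set_def by auto
  then show "v \<in> {v. {v} \<in> M2_complex q}"
    unfolding M2_complex_def by blast
qed

lemma mono_M2_label: "(mono (M2_label q (i, j)) :: (nat \<Rightarrow> nat, 'k::field) mpoly) = tau q i * tau q j"
  unfolding M2_label_def tau_def by (simp add: mono_add_exp)

lemma M2_vertex_monomials:
  "(\<lambda>v. mono (M2_label q v)) ` {v. {v} \<in> M2_complex q}
    = {a * b | a b. a \<in> tau q ` {1..q} \<and> b \<in> (tau q ` {1..q} :: (nat \<Rightarrow> nat, 'k::field) mpoly set)}"
proof (intro equalityI subsetI)
  fix p :: "(nat \<Rightarrow> nat, 'k) mpoly"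
  assume "p \<in> (\<lambda>v. mono (M2_label q v)) ` {v. {v} \<in> M2_complex q}"
  then show "p \<in> {a * b | a b. a \<in> tau q ` {1..q} \<and> b \<in> tau q ` {1..q}}"
    unfolding M2_vertices by (force simp: mono_M2_label)
next
  fix p :: "(nat \<Rightarrow> nat, 'k) mpoly"
  assume "p \<in> {a * b | a b. a \<in> tau q ` {1..q} \<and> b \<in> tau q ` {1..q}}"
  then obtain i j where ij: "i \<in> {1..q}" "j \<in> {1..q}" "p = tau q i * tau q j"
    by blast
  then have "p = mono (M2_label q (min i j, max i j))"
    by (cases "i \<le> j") (simp_all add: mono_M2_label min_def max_def mult.commute)
  moreover have "(min i j, max i j) \<in> {v. {v} \<in> M2_complex q}"
    using ij unfolding M2_vertices by auto
  ultimately show "p \<in> (\<lambda>v. mono (M2_label q v)) ` {v. {v} \<in> M2_complex q}"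
    by blast
qed

theorem corollary4p9:
  fixes q :: nat
  assumes "q \<ge> 1"
  shows "supports_minimal_free_resolution (M2_complex q) (M2_label q)
           (ideal_prod (perm_ideal q) (perm_ideal q) :: (nat \<Rightarrow> nat, 'k::field) mpoly set)"
  unfolding supports_minimal_free_resolution_def supports_free_resolution_def
proof (intro conjI allI impI)
  fix k and f :: "(nat \<times> nat) set \<Rightarrow> (nat \<Rightarrow> nat, 'k) mpoly"
  assume "1 \<le> k" "chain_on (M2_complex q) k f \<and> bps_diff (M2_complex q) (M2_label q) f = (\<lambda>_. 0)"
  then show "\<exists>g. chain_on (M2_complex q) (Suc k) g \<and> bps_diff (M2_complex q) (M2_label q) g = f"
    by (intro bps_exact_if_strands_exact[OF finite_M2_complex finite_M2_face M2_strands_exact]) auto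
next
  show "{bps_diff (M2_complex q) (M2_label q) f {} | f :: (nat \<times> nat) set \<Rightarrow> (nat \<Rightarrow> nat, 'k) mpoly.
      chain_on (M2_complex q) 1 f} = ideal_prod (perm_ideal q) (perm_ideal q)"
    unfolding augmentation_image[OF finite_M2_complex] M2_vertex_monomials perm_ideal_def ideal_prod_ideal_gen ..
next
  fix k \<sigma> and f :: "(nat \<times> nat) set \<Rightarrow> (nat \<Rightarrow> nat, 'k) mpoly"
  show "Poly_Mapping.lookup (bps_diff (M2_complex q) (M2_label q) f \<sigma>) 0 = 0"
    by (rule bps_diff_constant_coeff_eq_zero[OF finite_M2_face M2_face_label_delete_vertex])
qed

end
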